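(* Let $k\ge1$. The logic $\mathbb{L}_k$ is algebraizable in the sense of Blok and Pigozzi with set of equivalence formulas $\Delta(p_1,p_2)=\{\delta(p_1,p_2)\}$ and set of defining equations $E(p_1)=\{p_1\approx p_1\leftrightarrow p_1\}$; that is, for all variables $p_1,\dots,p_{2n}$: (C1) $\models_k\delta(p_1,p_1)$; (C2) $\delta(p_1,p_2)\models_k\delta(p_2,p_1)$; (C3) $\delta(p_1,p_2),\delta(p_2,p_3)\models_k\delta(p_1,p_3)$; (C4) $\delta(p_1,p_{n+1}),\dots,\delta(p_n,p_{2n})\models_k\delta(\#(p_1,\dots,p_n),\#(p_{n+1},\dots,p_{2n}))$ for every $n$-ary connective $\#$ with $n\ge1$; (C5) $p_1\models_k\delta(p_1,p_1\leftrightarrow p_1)$; (C6) $\delta(p_1,p_1\leftrightarrow p_1)\models_k p_1$.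
   Context: A modal pseudocomplemented De Morgan algebra ($mpM$-algebra) is an algebra $\langle A,\wedge,\vee,\sim,{}^\ast,0,1\rangle$ such that $\langle A,\wedge,\vee,\sim,0,1\rangle$ is a De Morgan algebra (bounded distributive lattice with $\sim\sim x=x$, $\sim(x\vee y)=\sim x\wedge\sim y$), $x^\ast$ is the pseudocomplement of $x$, and $x\vee\sim x\le x\vee x^\ast$. A $\mathcal{C}_k$-algebra ($k\ge1$) is a pair $(A,t)$ with $A$ an $mpM$-algebra and $t$ an $mpM$-automorphism of $A$ with $t^k=\mathrm{id}$. $Fm$ is the set of formulas built from a denumerable set of variables with connectives $\wedge,\vee$ (binary), $\sim,{}^\ast,t$ (unary), $\top,\bot$ (constants); a valuation into $(A,t)$ is a homomorphism $v:Fm\to(A,t)$ (with $v(\top)=1$, $v(\bot)=0$). The $1$-assertional logic $\mathbb{L}_k=\langle Fm,\models_k\rangle$: $\Gamma\models_k\alpha$ iff for every $\mathcal{C}_k$-algebra $(A,t)$ and every valuation $v$, if $v(\gamma)=1$ for all $\gamma\in\Gamma$ then $v(\alpha)=1$. Define $x\to y=\sim\big((\sim(x\vee y))^\ast\wedge(x\vee y)\big)\vee\big((\sim(x\wedge y))^\ast\wedge(x\wedge y)\big)$, $x\leftrightarrow y=(x\to y)\wedge(\sim y\to\sim x)$, and $\delta(p,q)=\bigwedge_{i=0}^{k-1}(t^ip\leftrightarrow t^iq)$. *)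

theory Defs
  imports Main
begin

datatype fm = Var nat | Conj fm fm | Disj fm fm | Neg fm | Star fm | Tc fm | Top | Bot

definition imp :: "fm \<Rightarrow> fm \<Rightarrow> fm" where
  "imp x y = Disj (Neg (Conj (Star (Neg (Disj x y))) (Disj x y)))
                  (Conj (Star (Neg (Conj x y))) (Conj x y))"

definition eqv :: "fm \<Rightarrow> fm \<Rightarrow> fm" where
  "eqv x y = Conj (imp x y) (imp (Neg y) (Neg x))"

fun Conjs :: "fm list \<Rightarrow> fm" where
  "Conjs [] = Top"
| "Conjs [a] = a"
| "Conjs (a # as) = Conj a (Conjs as)"

definition delta :: "nat \<Rightarrow> fm \<Rightarrow> fm \<Rightarrow> fm" where
  "delta k p q = Conjs (map (\<lambda>i. eqv ((Tc ^^ i) p) ((Tc ^^ i) q)) [0..<k])"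

record 'a ck_alg =
  car :: "'a set"
  mt :: "'a \<Rightarrow> 'a \<Rightarrow> 'a"
  jn :: "'a \<Rightarrow> 'a \<Rightarrow> 'a"
  ng :: "'a \<Rightarrow> 'a"
  pc :: "'a \<Rightarrow> 'a"
  zr :: "'a"
  un :: "'a"
  tt :: "'a \<Rightarrow> 'a"

definition leq :: "'a ck_alg \<Rightarrow> 'a \<Rightarrow> 'a \<Rightarrow> bool" where
  "leq M x y \<longleftrightarrow> mt M x y = x"

definition bdl :: "'a ck_alg \<Rightarrow> bool" where
  "bdl M \<longleftrightarrow>
     zr M \<in> car M \<and> un M \<in> car M \<and>
     (\<forall>x\<in>car M. \<forall>y\<in>car M. mt M x y \<in> car M \<and> jn M x y \<in> car M) \<and>
     (\<forall>x\<in>car M. \<forall>y\<in>car M. mt M x y = mt M y x \<and> jn M x y = jn M y x) \<and>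
     (\<forall>x\<in>car M. \<forall>y\<in>car M. \<forall>z\<in>car M.
        mt M (mt M x y) z = mt M x (mt M y z) \<and> jn M (jn M x y) z = jn M x (jn M y z)) \<and>
     (\<forall>x\<in>car M. \<forall>y\<in>car M. mt M x (jn M x y) = x \<and> jn M x (mt M x y) = x) \<and>
     (\<forall>x\<in>car M. \<forall>y\<in>car M. \<forall>z\<in>car M. mt M x (jn M y z) = jn M (mt M x y) (mt M x z)) \<and>
     (\<forall>x\<in>car M. mt M x (zr M) = zr M \<and> jn M x (un M) = un M)"

definition demorgan :: "'a ck_alg \<Rightarrow> bool" where
  "demorgan M \<longleftrightarrow> bdl M \<and>
     (\<forall>x\<in>car M. ng M x \<in> car M \<and> ng M (ng M x) = x) \<and>
     (\<forall>x\<in>car M. \<forall>y\<in>car M. ng M (jn M x y) = mt M (ng M x) (ng M y))"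

definition mpM :: "'a ck_alg \<Rightarrow> bool" where
  "mpM M \<longleftrightarrow> demorgan M \<and>
     (\<forall>x\<in>car M. pc M x \<in> car M \<and> (\<forall>y\<in>car M. mt M y x = zr M \<longleftrightarrow> leq M y (pc M x))) \<and>
     (\<forall>x\<in>car M. leq M (jn M x (ng M x)) (jn M x (pc M x)))"

definition Ck_algebra :: "nat \<Rightarrow> 'a ck_alg \<Rightarrow> bool" where
  "Ck_algebra k M \<longleftrightarrow> mpM M \<and>
     bij_betw (tt M) (car M) (car M) \<and>
     (\<forall>x\<in>car M. \<forall>y\<in>car M. tt M (mt M x y) = mt M (tt M x) (tt M y)
                            \<and> tt M (jn M x y) = jn M (tt M x) (tt M y)) \<and>
     (\<forall>x\<in>car M. tt M (ng M x) = ng M (tt M x) \<and> tt M (pc M x) = pc M (tt M x)) \<and>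
     tt M (zr M) = zr M \<and> tt M (un M) = un M \<and>
     (\<forall>x\<in>car M. (tt M ^^ k) x = x)"

fun eval :: "'a ck_alg \<Rightarrow> (nat \<Rightarrow> 'a) \<Rightarrow> fm \<Rightarrow> 'a" where
  "eval M v (Var n) = v n"
| "eval M v (Conj a b) = mt M (eval M v a) (eval M v b)"
| "eval M v (Disj a b) = jn M (eval M v a) (eval M v b)"
| "eval M v (Neg a) = ng M (eval M v a)"
| "eval M v (Star a) = pc M (eval M v a)"
| "eval M v (Tc a) = tt M (eval M v a)"
| "eval M v Top = un M"
| "eval M v Bot = zr M"

text \<open>1-assertional consequence of L_k, relative to all C_k-algebras whose carrier
  lives in the type 'a.  A theorem proved for an arbitrary type 'a yields the
  consequence over all C_k-algebras.\<close>
definition cons_k :: "'a itself \<Rightarrow> nat \<Rightarrow> fm set \<Rightarrow> fm \<Rightarrow> bool" where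
  "cons_k _ k \<Gamma> \<phi> \<longleftrightarrow>
     (\<forall>(M::'a ck_alg) v. Ck_algebra k M \<and> (\<forall>n. v n \<in> car M) \<longrightarrow>
        (\<forall>\<gamma>\<in>\<Gamma>. eval M v \<gamma> = un M) \<longrightarrow> eval M v \<phi> = un M)"

end

(*
  In a C_k-algebra the formula delta(p, q) takes the value 1 exactly when p and q take the same
  value, so all six conditions reduce to properties of equality.  The core is that in an
  mpM-algebra x <-> y = 1 forces x = y.  Put nec z = (~z)* /\ z.  The axiom
  x \/ ~x <= x \/ x* makes every z split as (z /\ ~z) \/ nec z, with nec z complemented by
  ~(nec z).  Hence x -> y = 1 means nec (x /\ y) = nec (x \/ y), and x <-> y = 1 adds the same
  equation for ~(x \/ y) <= ~(x /\ y).  Two elements c <= d whose nec-parts and those of their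
  negations agree coincide: the splitting of ~c bounds the summand d /\ ~d of d below c.  So
  x /\ y = x \/ y, i.e. x = y.
*)

theory Submission
  imports Defs
begin

locale mpm_algebra =
  fixes M :: "'a ck_alg"
  assumes mpM: "mpM M"
begin

abbreviation C where "C \<equiv> car M"
abbreviation meet (infixl "\<sqinter>" 70) where "x \<sqinter> y \<equiv> mt M x y"
abbreviation join (infixl "\<squnion>" 65) where "x \<squnion> y \<equiv> jn M x y"
abbreviation neg ("\<sim>_" [80] 80) where "\<sim>x \<equiv> ng M x"
abbreviation pcomp ("_\<^sup>\<star>" [1000] 999) where "x\<^sup>\<star> \<equiv> pc M x"
abbreviation zero ("\<zero>") where "\<zero> \<equiv> zr M"
abbreviation one ("\<one>") where "\<one> \<equiv> un M"
abbreviation leq_M (infix "\<sqsubseteq>" 50) where "x \<sqsubseteq> y \<equiv> leq M x y"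

lemma bdl: "bdl M" and demorgan: "demorgan M"
  using mpM unfolding mpM_def demorgan_def by auto

lemma zero_closed [simp]: "\<zero> \<in> C" and one_closed [simp]: "\<one> \<in> C"
  using bdl unfolding bdl_def by auto
lemma meet_closed [simp]: "x \<in> C \<Longrightarrow> y \<in> C \<Longrightarrow> x \<sqinter> y \<in> C"
  using bdl unfolding bdl_def by auto
lemma join_closed [simp]: "x \<in> C \<Longrightarrow> y \<in> C \<Longrightarrow> x \<squnion> y \<in> C"
  using bdl unfolding bdl_def by auto
lemma neg_closed [simp]: "x \<in> C \<Longrightarrow> \<sim>x \<in> C"
  using demorgan unfolding demorgan_def by auto
lemma pc_closed [simp]: "x \<in> C \<Longrightarrow> x\<^sup>\<star> \<in> C"
  using mpM unfolding mpM_def by auto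

lemma meet_comm: "x \<in> C \<Longrightarrow> y \<in> C \<Longrightarrow> x \<sqinter> y = y \<sqinter> x"
  using bdl unfolding bdl_def by auto
lemma join_comm: "x \<in> C \<Longrightarrow> y \<in> C \<Longrightarrow> x \<squnion> y = y \<squnion> x"
  using bdl unfolding bdl_def by auto
lemma meet_assoc: "x \<in> C \<Longrightarrow> y \<in> C \<Longrightarrow> z \<in> C \<Longrightarrow> x \<sqinter> y \<sqinter> z = x \<sqinter> (y \<sqinter> z)"
  using bdl unfolding bdl_def by auto
lemma meet_absorb: "x \<in> C \<Longrightarrow> y \<in> C \<Longrightarrow> x \<sqinter> (x \<squnion> y) = x"
  using bdl unfolding bdl_def by auto
lemma join_absorb: "x \<in> C \<Longrightarrow> y \<in> C \<Longrightarrow> x \<squnion> (x \<sqinter> y) = x"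
  using bdl unfolding bdl_def by auto
lemma meet_join_distrib:
  "x \<in> C \<Longrightarrow> y \<in> C \<Longrightarrow> z \<in> C \<Longrightarrow> x \<sqinter> (y \<squnion> z) = x \<sqinter> y \<squnion> x \<sqinter> z"
  using bdl unfolding bdl_def by auto
lemma meet_zero [simp]: "x \<in> C \<Longrightarrow> x \<sqinter> \<zero> = \<zero>"
  using bdl unfolding bdl_def by auto
lemma join_one [simp]: "x \<in> C \<Longrightarrow> x \<squnion> \<one> = \<one>"
  using bdl unfolding bdl_def by auto
lemma neg_neg [simp]: "x \<in> C \<Longrightarrow> \<sim>\<sim>x = x"
  using demorgan unfolding demorgan_def by auto
lemma neg_join: "x \<in> C \<Longrightarrow> y \<in> C \<Longrightarrow> \<sim>(x \<squnion> y) = \<sim>x \<sqinter> \<sim>y"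
  using demorgan unfolding demorgan_def by auto
lemma meet_eq_zero_iff_leq_pc: "x \<in> C \<Longrightarrow> y \<in> C \<Longrightarrow> y \<sqinter> x = \<zero> \<longleftrightarrow> y \<sqsubseteq> x\<^sup>\<star>"
  using mpM unfolding mpM_def by auto
lemma join_neg_leq_join_pc: "x \<in> C \<Longrightarrow> x \<squnion> \<sim>x \<sqsubseteq> x \<squnion> x\<^sup>\<star>"
  using mpM unfolding mpM_def by auto

lemma meet_idem [simp]: "x \<in> C \<Longrightarrow> x \<sqinter> x = x"
  by (metis meet_absorb join_absorb meet_closed)
lemma join_idem [simp]: "x \<in> C \<Longrightarrow> x \<squnion> x = x"
  using join_absorb[of x "x \<squnion> x"] meet_absorb[of x x] by simp
lemma zero_meet [simp]: "x \<in> C \<Longrightarrow> \<zero> \<sqinter> x = \<zero>"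
  by (metis meet_comm meet_zero zero_closed)
lemma join_zero [simp]: "x \<in> C \<Longrightarrow> x \<squnion> \<zero> = x"
  by (metis join_absorb meet_zero zero_closed)
lemma zero_join [simp]: "x \<in> C \<Longrightarrow> \<zero> \<squnion> x = x"
  by (metis join_comm join_zero zero_closed)
lemma meet_one [simp]: "x \<in> C \<Longrightarrow> x \<sqinter> \<one> = x"
  by (metis meet_absorb join_one one_closed)
lemma join_meet_distrib:
  "x \<in> C \<Longrightarrow> y \<in> C \<Longrightarrow> z \<in> C \<Longrightarrow> (y \<squnion> z) \<sqinter> x = y \<sqinter> x \<squnion> z \<sqinter> x"
  by (metis meet_join_distrib meet_comm join_closed)
lemma neg_meet: "x \<in> C \<Longrightarrow> y \<in> C \<Longrightarrow> \<sim>(x \<sqinter> y) = \<sim>x \<squnion> \<sim>y"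
  by (metis neg_join neg_neg neg_closed join_closed)
lemma neg_one [simp]: "\<sim>\<one> = \<zero>"
  using neg_join[of "\<sim>\<zero>" "\<one>"] by simp
lemma neg_zero [simp]: "\<sim>\<zero> = \<one>"
  using neg_neg[OF one_closed] by simp

lemma leq_refl: "x \<in> C \<Longrightarrow> x \<sqsubseteq> x"
  unfolding leq_def by simp
lemma leq_trans: "x \<in> C \<Longrightarrow> y \<in> C \<Longrightarrow> z \<in> C \<Longrightarrow> x \<sqsubseteq> y \<Longrightarrow> y \<sqsubseteq> z \<Longrightarrow> x \<sqsubseteq> z"
  unfolding leq_def by (metis meet_assoc)
lemma leq_antisym: "x \<in> C \<Longrightarrow> y \<in> C \<Longrightarrow> x \<sqsubseteq> y \<Longrightarrow> y \<sqsubseteq> x \<Longrightarrow> x = y"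
  unfolding leq_def by (metis meet_comm)
lemma leq_zero_iff: "x \<in> C \<Longrightarrow> x \<sqsubseteq> \<zero> \<longleftrightarrow> x = \<zero>"
  unfolding leq_def by auto
lemma meet_leq_left: "x \<in> C \<Longrightarrow> y \<in> C \<Longrightarrow> x \<sqinter> y \<sqsubseteq> x"
  unfolding leq_def by (metis meet_assoc meet_comm meet_idem)
lemma meet_leq_right: "x \<in> C \<Longrightarrow> y \<in> C \<Longrightarrow> x \<sqinter> y \<sqsubseteq> y"
  unfolding leq_def by (simp add: meet_assoc)
lemma leq_meetI: "x \<in> C \<Longrightarrow> y \<in> C \<Longrightarrow> z \<in> C \<Longrightarrow> z \<sqsubseteq> x \<Longrightarrow> z \<sqsubseteq> y \<Longrightarrow> z \<sqsubseteq> x \<sqinter> y"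
  unfolding leq_def using meet_assoc[of z x y] by simp
lemma meet_mono:
  assumes "a \<in> C" "b \<in> C" "c \<in> C" "d \<in> C" and "a \<sqsubseteq> b" "c \<sqsubseteq> d"
  shows "a \<sqinter> c \<sqsubseteq> b \<sqinter> d"
proof (rule leq_meetI)
  show "a \<sqinter> c \<sqsubseteq> b"
    using assms leq_trans[of "a \<sqinter> c" a b] meet_leq_left[of a c] by simp
  show "a \<sqinter> c \<sqsubseteq> d"
    using assms leq_trans[of "a \<sqinter> c" c d] meet_leq_right[of a c] by simp
qed (use assms in simp_all)
lemma leq_join_left: "x \<in> C \<Longrightarrow> y \<in> C \<Longrightarrow> x \<sqsubseteq> x \<squnion> y"
  unfolding leq_def by (rule meet_absorb)
lemma leq_join_right: "x \<in> C \<Longrightarrow> y \<in> C \<Longrightarrow> y \<sqsubseteq> x \<squnion> y"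
  unfolding leq_def using meet_absorb[of y x] join_comm[of x y] by simp
lemma join_leqI: "x \<in> C \<Longrightarrow> y \<in> C \<Longrightarrow> z \<in> C \<Longrightarrow> x \<sqsubseteq> z \<Longrightarrow> y \<sqsubseteq> z \<Longrightarrow> x \<squnion> y \<sqsubseteq> z"
  unfolding leq_def by (simp add: join_meet_distrib)

lemma neg_antitone:
  assumes x: "x \<in> C" and y: "y \<in> C" and "x \<sqsubseteq> y"
  shows "\<sim>y \<sqsubseteq> \<sim>x"
proof -
  have "\<sim>x = \<sim>x \<squnion> \<sim>y"
    using assms neg_meet[of x y] unfolding leq_def by simp
  then have "\<sim>y \<sqinter> \<sim>x = \<sim>y \<sqinter> (\<sim>y \<squnion> \<sim>x)"
    using x y by (simp add: join_comm)
  then show ?thesis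
    unfolding leq_def using x y by (simp add: meet_absorb)
qed
lemma pc_meet [simp]: "x \<in> C \<Longrightarrow> x\<^sup>\<star> \<sqinter> x = \<zero>"
  using meet_eq_zero_iff_leq_pc[of x "x\<^sup>\<star>"] leq_refl[of "x\<^sup>\<star>"] by simp
lemma pc_antitone:
  assumes x: "x \<in> C" and y: "y \<in> C" and "x \<sqsubseteq> y"
  shows "y\<^sup>\<star> \<sqsubseteq> x\<^sup>\<star>"
proof -
  have "y\<^sup>\<star> \<sqinter> x = y\<^sup>\<star> \<sqinter> (y \<sqinter> x)"
    using assms unfolding leq_def by (simp add: meet_comm)
  also have "\<dots> = \<zero>"
    using x y meet_assoc[of "y\<^sup>\<star>" y x] by simp
  finally show ?thesis
    using x y meet_eq_zero_iff_leq_pc[of x "y\<^sup>\<star>"] by simp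
qed

lemma meet_pc [simp]: "x \<in> C \<Longrightarrow> x \<sqinter> x\<^sup>\<star> = \<zero>"
  using pc_meet[of x] meet_comm[of x "x\<^sup>\<star>"] by simp

definition nec :: "'a \<Rightarrow> 'a" where
  "nec x = (\<sim>x)\<^sup>\<star> \<sqinter> x"

lemma nec_closed [simp]: "x \<in> C \<Longrightarrow> nec x \<in> C"
  unfolding nec_def by simp

lemma nec_leq: "x \<in> C \<Longrightarrow> nec x \<sqsubseteq> x"
  unfolding nec_def by (simp add: meet_leq_right)

lemma nec_mono:
  assumes "c \<in> C" "d \<in> C" and "c \<sqsubseteq> d"
  shows "nec c \<sqsubseteq> nec d"
proof -
  have "(\<sim>c)\<^sup>\<star> \<sqsubseteq> (\<sim>d)\<^sup>\<star>"
    using assms neg_antitone[of c d] pc_antitone[of "\<sim>d" "\<sim>c"] by simp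
  then show ?thesis
    unfolding nec_def using assms meet_mono[of "(\<sim>c)\<^sup>\<star>" "(\<sim>d)\<^sup>\<star>" c d] by simp
qed

lemma meet_nec_neg [simp]: "x \<in> C \<Longrightarrow> x \<sqinter> nec (\<sim>x) = \<zero>"
  using meet_mono[of x x "nec (\<sim>x)" "x\<^sup>\<star>"] leq_refl[of x] meet_leq_left[of "x\<^sup>\<star>" "\<sim>x"]
    leq_zero_iff[of "x \<sqinter> nec (\<sim>x)"]
  unfolding nec_def by simp

lemma leq_join_neg_pc_neg: "x \<in> C \<Longrightarrow> x \<sqsubseteq> \<sim>x \<squnion> (\<sim>x)\<^sup>\<star>"
  using leq_trans[of x "\<sim>x \<squnion> x" "\<sim>x \<squnion> (\<sim>x)\<^sup>\<star>"] leq_join_right[of "\<sim>x" x]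
    join_neg_leq_join_pc[of "\<sim>x"]
  by simp

lemma meet_neg_pc_neg_leq:
  assumes x: "x \<in> C"
  shows "x \<sqinter> \<sim>((\<sim>x)\<^sup>\<star>) \<sqsubseteq> \<sim>x"
proof -
  have "\<sim>(\<sim>x \<squnion> (\<sim>x)\<^sup>\<star>) \<sqsubseteq> \<sim>(\<sim>x \<squnion> x)"
    using x neg_antitone join_neg_leq_join_pc[of "\<sim>x"] by simp
  then have "x \<sqinter> \<sim>((\<sim>x)\<^sup>\<star>) \<sqsubseteq> x \<sqinter> \<sim>x"
    using x by (simp add: neg_join meet_comm)
  then show ?thesis
    using x leq_trans[of _ "x \<sqinter> \<sim>x" "\<sim>x"] meet_leq_right[of x "\<sim>x"] by simp
qed

lemma nec_split: "x \<in> C \<Longrightarrow> x = x \<sqinter> \<sim>x \<squnion> nec x"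
  using leq_join_neg_pc_neg[of x] meet_join_distrib[of x "\<sim>x" "(\<sim>x)\<^sup>\<star>"]
    meet_comm[of x "(\<sim>x)\<^sup>\<star>"]
  unfolding leq_def nec_def by simp

lemma nec_meet_neg_nec [simp]:
  assumes x: "x \<in> C"
  shows "nec x \<sqinter> \<sim>(nec x) = \<zero>"
proof -
  define p where "p = (\<sim>x)\<^sup>\<star>"
  have p: "p \<in> C"
    using x by (simp add: p_def)
  have "x \<sqinter> \<sim>p \<squnion> x \<sqinter> \<sim>x \<sqsubseteq> \<sim>x"
    using x p meet_neg_pc_neg_leq[of x] meet_leq_right[of x "\<sim>x"]
    by (simp add: p_def join_leqI)
  then have "p \<sqinter> (x \<sqinter> \<sim>p \<squnion> x \<sqinter> \<sim>x) \<sqsubseteq> p \<sqinter> \<sim>x"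
    using x p meet_mono leq_refl by simp
  moreover have "nec x \<sqinter> \<sim>(nec x) = p \<sqinter> (x \<sqinter> \<sim>p \<squnion> x \<sqinter> \<sim>x)"
    using x p by (simp add: nec_def p_def neg_meet meet_assoc meet_join_distrib)
  moreover have "p \<sqinter> \<sim>x = \<zero>"
    using x by (simp add: p_def)
  ultimately show ?thesis
    using x p leq_zero_iff by simp
qed

lemma neg_nec_join_nec [simp]: "x \<in> C \<Longrightarrow> \<sim>(nec x) \<squnion> nec x = \<one>"
  using neg_meet[of "nec x" "\<sim>(nec x)"] by (simp add: join_comm)

lemma nec_eq_if_neg_nec_join_nec_eq_one:
  assumes c: "c \<in> C" and d: "d \<in> C" and "c \<sqsubseteq> d" and one: "\<sim>(nec d) \<squnion> nec c = \<one>"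
  shows "nec c = nec d"
proof -
  have "nec d = nec d \<sqinter> (\<sim>(nec d) \<squnion> nec c)"
    using one d by simp
  also have "\<dots> = nec d \<sqinter> nec c"
    using c d by (simp add: meet_join_distrib)
  also have "\<dots> = nec c"
    using assms nec_mono[of c d] unfolding leq_def by (simp add: meet_comm)
  finally show ?thesis ..
qed

lemma eq_if_nec_eq:
  assumes c: "c \<in> C" and d: "d \<in> C" and "c \<sqsubseteq> d"
    and nec_eq: "nec c = nec d" and nec_neg_eq: "nec (\<sim>c) = nec (\<sim>d)"
  shows "c = d"
proof (rule leq_antisym[OF c d \<open>c \<sqsubseteq> d\<close>])
  have "d \<sqinter> \<sim>d \<sqsubseteq> \<sim>c"
    using c d \<open>c \<sqsubseteq> d\<close> neg_antitone[of c d] leq_trans[of "d \<sqinter> \<sim>d" "\<sim>d" "\<sim>c"]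
      meet_leq_right[of d "\<sim>d"]
    by simp
  then have "d \<sqinter> \<sim>d = d \<sqinter> \<sim>d \<sqinter> (\<sim>c \<sqinter> c \<squnion> nec (\<sim>d))"
    using c nec_split[of "\<sim>c"] nec_neg_eq unfolding leq_def by simp
  also have "\<dots> = d \<sqinter> \<sim>d \<sqinter> (\<sim>c \<sqinter> c) \<squnion> d \<sqinter> \<sim>d \<sqinter> nec (\<sim>d)"
    using c d by (simp add: meet_join_distrib)
  also have "d \<sqinter> \<sim>d \<sqinter> nec (\<sim>d) = \<zero>"
    using d meet_comm[of d "\<sim>d"] meet_assoc[of "\<sim>d" d "nec (\<sim>d)"] by simp
  finally have "d \<sqinter> \<sim>d = d \<sqinter> \<sim>d \<sqinter> (\<sim>c \<sqinter> c)"
    using c d by simp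
  then have "d \<sqinter> \<sim>d \<sqsubseteq> c"
    using c d leq_trans[of "d \<sqinter> \<sim>d \<sqinter> (\<sim>c \<sqinter> c)" "\<sim>c \<sqinter> c" c]
      meet_leq_right[of "d \<sqinter> \<sim>d" "\<sim>c \<sqinter> c"] meet_leq_right[of "\<sim>c" c]
    by simp
  moreover have "nec d \<sqsubseteq> c"
    using c nec_eq nec_leq[of c] by simp
  ultimately show "d \<sqsubseteq> c"
    using c d nec_split[of d] join_leqI[of "d \<sqinter> \<sim>d" "nec d" c] by simp
qed

lemma meet_eq_one_iff: "x \<in> C \<Longrightarrow> y \<in> C \<Longrightarrow> x \<sqinter> y = \<one> \<longleftrightarrow> x = \<one> \<and> y = \<one>"
  using join_absorb[of x y] join_absorb[of y x] meet_comm[of x y] by auto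

lemma meet_leq_join: "x \<in> C \<Longrightarrow> y \<in> C \<Longrightarrow> x \<sqinter> y \<sqsubseteq> x \<squnion> y"
  using leq_trans[of "x \<sqinter> y" x "x \<squnion> y"] meet_leq_left[of x y] leq_join_left[of x y] by simp

lemma eq_if_meet_eq_join:
  assumes x: "x \<in> C" and y: "y \<in> C" and eq: "x \<sqinter> y = x \<squnion> y"
  shows "x = y"
proof (rule leq_antisym[OF x y])
  show "x \<sqsubseteq> y"
    using x y eq leq_join_left[of x y] meet_leq_right[of x y] leq_trans[of x "x \<sqinter> y" y] by simp
  show "y \<sqsubseteq> x"
    using x y eq leq_join_right[of x y] meet_leq_left[of x y] leq_trans[of y "x \<sqinter> y" x] by simp
qed

definition imp_op :: "'a \<Rightarrow> 'a \<Rightarrow> 'a" where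
  "imp_op x y = \<sim>(nec (x \<squnion> y)) \<squnion> nec (x \<sqinter> y)"

definition eqv_op :: "'a \<Rightarrow> 'a \<Rightarrow> 'a" where
  "eqv_op x y = imp_op x y \<sqinter> imp_op (\<sim>y) (\<sim>x)"

lemma imp_op_closed [simp]: "x \<in> C \<Longrightarrow> y \<in> C \<Longrightarrow> imp_op x y \<in> C"
  unfolding imp_op_def by simp

lemma imp_op_eq_one_iff: "x \<in> C \<Longrightarrow> y \<in> C \<Longrightarrow> imp_op x y = \<one> \<longleftrightarrow> nec (x \<sqinter> y) = nec (x \<squnion> y)"
  using nec_eq_if_neg_nec_join_nec_eq_one[of "x \<sqinter> y" "x \<squnion> y"] meet_leq_join[of x y]
  unfolding imp_op_def by auto

lemma eqv_op_eq_one_iff: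
  assumes x: "x \<in> C" and y: "y \<in> C"
  shows "eqv_op x y = \<one> \<longleftrightarrow> x = y"
proof
  assume "eqv_op x y = \<one>"
  then have "nec (x \<sqinter> y) = nec (x \<squnion> y)" and "nec (\<sim>y \<sqinter> \<sim>x) = nec (\<sim>y \<squnion> \<sim>x)"
    using x y by (simp_all add: eqv_op_def meet_eq_one_iff imp_op_eq_one_iff)
  moreover have "\<sim>y \<sqinter> \<sim>x = \<sim>(x \<squnion> y)" and "\<sim>y \<squnion> \<sim>x = \<sim>(x \<sqinter> y)"
    using x y by (simp_all add: neg_join neg_meet meet_comm join_comm)
  ultimately have "x \<sqinter> y = x \<squnion> y"
    using x y eq_if_nec_eq[of "x \<sqinter> y" "x \<squnion> y"] meet_leq_join[of x y] by simp
  then show "x = y"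
    using x y eq_if_meet_eq_join by blast
qed (use x in \<open>simp add: eqv_op_def imp_op_def\<close>)

lemma eval_eqv: "eval M v (eqv p q) = eqv_op (eval M v p) (eval M v q)"
  by (simp add: eqv_def imp_def eqv_op_def imp_op_def nec_def)

end

lemma Ck_algebra_mpm_algebra: "Ck_algebra k M \<Longrightarrow> mpm_algebra M"
  unfolding Ck_algebra_def by (simp add: mpm_algebra_def)

lemma Ck_algebra_tt_closed: "Ck_algebra k M \<Longrightarrow> x \<in> car M \<Longrightarrow> tt M x \<in> car M"
  unfolding Ck_algebra_def by (blast intro: bij_betw_apply)

lemma Ck_algebra_funpow_tt_closed:
  "Ck_algebra k M \<Longrightarrow> x \<in> car M \<Longrightarrow> (tt M ^^ i) x \<in> car M"
  by (induct i) (simp_all add: Ck_algebra_tt_closed)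

lemma eval_closed:
  assumes "Ck_algebra k M" and "\<forall>n. v n \<in> car M"
  shows "eval M v \<phi> \<in> car M"
proof -
  interpret mpm_algebra M
    using assms(1) by (rule Ck_algebra_mpm_algebra)
  show ?thesis
    using assms Ck_algebra_tt_closed[OF assms(1)] by (induct \<phi>) auto
qed

lemma eval_funpow_Tc: "eval M v ((Tc ^^ i) p) = (tt M ^^ i) (eval M v p)"
  by (induct i) auto

lemma eval_Conjs_eq_one_iff:
  assumes "Ck_algebra k M" and "\<forall>n. v n \<in> car M"
  shows "eval M v (Conjs \<phi>s) = un M \<longleftrightarrow> (\<forall>\<phi>\<in>set \<phi>s. eval M v \<phi> = un M)"
proof -
  interpret mpm_algebra M
    using assms(1) by (rule Ck_algebra_mpm_algebra)
  show ?thesis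
    using eval_closed[OF assms] by (induct \<phi>s rule: Conjs.induct) (simp_all add: meet_eq_one_iff)
qed

lemma eval_delta_eq_one_iff:
  assumes "k \<ge> 1" and M: "Ck_algebra k M" and v: "\<forall>n. v n \<in> car M"
  shows "eval M v (delta k p q) = un M \<longleftrightarrow> eval M v p = eval M v q"
proof -
  interpret mpm_algebra M
    using M by (rule Ck_algebra_mpm_algebra)
  have "eval M v (delta k p q) = un M \<longleftrightarrow>
      (\<forall>i<k. eqv_op ((tt M ^^ i) (eval M v p)) ((tt M ^^ i) (eval M v q)) = \<one>)"
    unfolding delta_def eval_Conjs_eq_one_iff[OF M v] by (auto simp: eval_eqv eval_funpow_Tc)
  also have "\<dots> \<longleftrightarrow> (\<forall>i<k. (tt M ^^ i) (eval M v p) = (tt M ^^ i) (eval M v q))"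
    using eqv_op_eq_one_iff Ck_algebra_funpow_tt_closed[OF M] eval_closed[OF M v] by simp
  also have "\<dots> \<longleftrightarrow> eval M v p = eval M v q"
    using \<open>k \<ge> 1\<close> by (auto dest: spec[of _ 0])
  finally show ?thesis .
qed

lemma eval_eqv_self:
  assumes M: "Ck_algebra k M" and v: "\<forall>n. v n \<in> car M"
  shows "eval M v (eqv p p) = un M"
proof -
  interpret mpm_algebra M
    using M by (rule Ck_algebra_mpm_algebra)
  show ?thesis
    using eval_closed[OF M v] by (simp add: eval_eqv eqv_op_eq_one_iff)
qed

theorem theorem7p6:
  fixes k :: nat
  assumes "k \<ge> 1"
  shows
   "(\<forall>p1. cons_k TYPE('a) k {} (delta k (Var p1) (Var p1))) \<and>
    (\<forall>p1 p2. cons_k TYPE('a) k {delta k (Var p1) (Var p2)} (delta k (Var p2) (Var p1))) \<and>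
    (\<forall>p1 p2 p3. cons_k TYPE('a) k {delta k (Var p1) (Var p2), delta k (Var p2) (Var p3)}
                        (delta k (Var p1) (Var p3))) \<and>
    (\<forall>p1 p2 p3 p4. cons_k TYPE('a) k {delta k (Var p1) (Var p3), delta k (Var p2) (Var p4)}
                        (delta k (Conj (Var p1) (Var p2)) (Conj (Var p3) (Var p4)))) \<and>
    (\<forall>p1 p2 p3 p4. cons_k TYPE('a) k {delta k (Var p1) (Var p3), delta k (Var p2) (Var p4)}
                        (delta k (Disj (Var p1) (Var p2)) (Disj (Var p3) (Var p4)))) \<and>
    (\<forall>p1 p2. cons_k TYPE('a) k {delta k (Var p1) (Var p2)} (delta k (Neg (Var p1)) (Neg (Var p2)))) \<and>
    (\<forall>p1 p2. cons_k TYPE('a) k {delta k (Var p1) (Var p2)} (delta k (Star (Var p1)) (Star (Var p2)))) \<and>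
    (\<forall>p1 p2. cons_k TYPE('a) k {delta k (Var p1) (Var p2)} (delta k (Tc (Var p1)) (Tc (Var p2)))) \<and>
    (\<forall>p1. cons_k TYPE('a) k {Var p1} (delta k (Var p1) (eqv (Var p1) (Var p1)))) \<and>
    (\<forall>p1. cons_k TYPE('a) k {delta k (Var p1) (eqv (Var p1) (Var p1))} (Var p1))"
proof -
  have "\<And>(M :: 'a ck_alg) v p q. Ck_algebra k M \<Longrightarrow> \<forall>n. v n \<in> car M \<Longrightarrow>
      eval M v (delta k p q) = un M \<longleftrightarrow> eval M v p = eval M v q"
    using eval_delta_eq_one_iff[OF assms] .
  moreover have "\<And>(M :: 'a ck_alg) v p. Ck_algebra k M \<Longrightarrow> \<forall>n. v n \<in> car M \<Longrightarrow>
      eval M v (eqv p p) = un M"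
    using eval_eqv_self .
  ultimately show ?thesis
    unfolding cons_k_def by simp
qed

end
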